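(* Let $T>0$, $C_1>0$, and let $H:(0,1)^n\times\mathbb S(n)\to\mathbb R^n$, $B:(0,1)^n\times\mathbb S(n)\to\mathbb S(n)$ be $C^1$ with $(B(\mu,p),p)\ge(H(\mu,p),\mu)-C_1$ and $H_i(\mu,p)\ge-C_1$ for all $(\mu,p)$ and $i$, and let $g:[0,1]^n\to\mathbb R^n$ satisfy $|g_i|\le C_1$ on $[0,1]^n$. Let $\epsilon>0$, $\mu\in\mathcal P_\epsilon(\mathbb G)$, $t\in[0,T)$, $\lambda\in[0,1]$. Then every classical solution $(\phi,\rho):[t,T]\to\mathbb R^n\times(0,1)^n$ of $$\dot\phi=H(\rho,\lambda\nabla_{\mathbb G}\phi)-\Delta_{\mathbb G}\phi,\quad \dot\rho=\nabla_{\mathbb G}\cdot B(\rho,\lambda\nabla_{\mathbb G}\phi)+\Delta_{\mathbb G}\rho\ \text{ on }(t,T),\quad \phi(T)=g(\rho(T)),\ \rho(t)=\mu,$$ satisfies $$\epsilon\,\Big\|\max_{1\le i\le n}|\lambda\phi_i|\Big\|_{L^\infty(t,T)}\le(5(T-t)+4)C_1.$$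
   Context: $\mathbb G$ is a finite connected simple undirected graph on $\{1,\dots,n\}$ with symmetric edge weights $\omega_{ij}>0$ iff $(i,j)$ is an edge. $\mathbb S(n)$: skew-symmetric matrices with $(m,\tilde m)=\frac12\sum_{(i,j)\in\mathbb E}m^{ij}\tilde m^{ij}$; Euclidean inner product on $\mathbb R^n$. $(\nabla_{\mathbb G}u)^{ij}=\sqrt{\omega_{ij}}(u^i-u^j)$, $(\nabla_{\mathbb G}\cdot m)^i=\sum_{j\ne i}\sqrt{\omega_{ij}}m^{ji}$, $(\Delta_{\mathbb G}u)^i=\sum_j\omega_{ij}(u^j-u^i)$. $\mathcal P_\epsilon(\mathbb G)$: probability vectors with all entries $>\epsilon$. Classical solution: a $C^1$ pair satisfying the system pointwise. *)

theory Defs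
  imports "HOL-Analysis.Analysis"
begin

text \<open>Vertices of the graph are the elements of a finite type 'n (so n = CARD('n)).
  Weights: w i j. Edges are the ordered pairs (i,j) with w i j > 0.\<close>

definition weighted_graph :: "('n::finite \<Rightarrow> 'n \<Rightarrow> real) \<Rightarrow> bool" where
  "weighted_graph w \<longleftrightarrow>
     (\<forall>i j. w i j = w j i) \<and> (\<forall>i j. w i j \<ge> 0) \<and> (\<forall>i. w i i = 0) \<and>
     (\<forall>i j. (i, j) \<in> {(a, b). w a b > 0}\<^sup>*)"

definition skew :: "real^'n^'n \<Rightarrow> bool" where
  "skew m \<longleftrightarrow> (\<forall>i j. m$i$j = - m$j$i)"

definition Sinner :: "('n::finite \<Rightarrow> 'n \<Rightarrow> real) \<Rightarrow> real^'n^'n \<Rightarrow> real^'n^'n \<Rightarrow> real" where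
  "Sinner w m m' = (1/2) * (\<Sum>(i, j) \<in> {(a, b). w a b > 0}. m$i$j * m'$i$j)"

definition ggrad :: "('n::finite \<Rightarrow> 'n \<Rightarrow> real) \<Rightarrow> real^'n \<Rightarrow> real^'n^'n" where
  "ggrad w u = (\<chi> i j. sqrt (w i j) * (u$i - u$j))"

definition gdiv :: "('n::finite \<Rightarrow> 'n \<Rightarrow> real) \<Rightarrow> real^'n^'n \<Rightarrow> real^'n" where
  "gdiv w m = (\<chi> i. \<Sum>j \<in> UNIV - {i}. sqrt (w i j) * m$j$i)"

definition glap :: "('n::finite \<Rightarrow> 'n \<Rightarrow> real) \<Rightarrow> real^'n \<Rightarrow> real^'n" where
  "glap w u = (\<chi> i. \<Sum>j\<in>UNIV. w i j * (u$j - u$i))"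

definition open_cube :: "(real^'n) set" where
  "open_cube = {x. \<forall>i. 0 < x$i \<and> x$i < 1}"

definition closed_cube :: "(real^'n) set" where
  "closed_cube = {x. \<forall>i. 0 \<le> x$i \<and> x$i \<le> 1}"

definition Peps :: "real \<Rightarrow> (real^'n::finite) set" where
  "Peps \<epsilon> = {x. (\<Sum>i\<in>UNIV. x$i) = 1 \<and> (\<forall>i. x$i > \<epsilon>)}"

definition C1_on :: "'a::real_normed_vector set \<Rightarrow> ('a \<Rightarrow> 'b::real_normed_vector) \<Rightarrow> bool" where
  "C1_on S f \<longleftrightarrow> (\<exists>f'. (\<forall>x\<in>S. (f has_derivative blinfun_apply (f' x)) (at x within S))
                      \<and> continuous_on S f')"

definition SDom :: "((real^'n) \<times> (real^'n^'n)) set" where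
  "SDom = {(m, p). m \<in> open_cube \<and> skew p}"

definition classical_solution ::
  "('n::finite \<Rightarrow> 'n \<Rightarrow> real) \<Rightarrow> ((real^'n) \<times> (real^'n^'n) \<Rightarrow> real^'n)
   \<Rightarrow> ((real^'n) \<times> (real^'n^'n) \<Rightarrow> real^'n^'n) \<Rightarrow> (real^'n \<Rightarrow> real^'n) \<Rightarrow> real
   \<Rightarrow> real^'n \<Rightarrow> real \<Rightarrow> real \<Rightarrow> (real \<Rightarrow> real^'n) \<Rightarrow> (real \<Rightarrow> real^'n) \<Rightarrow> bool" where
  "classical_solution w H B g lam \<mu> t T \<phi> \<rho> \<longleftrightarrow>
     (\<exists>\<phi>' \<rho>'.
        continuous_on {t..T} \<phi>' \<and> continuous_on {t..T} \<rho>' \<and>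
        (\<forall>s\<in>{t..T}. (\<phi> has_vector_derivative \<phi>' s) (at s within {t..T})) \<and>
        (\<forall>s\<in>{t..T}. (\<rho> has_vector_derivative \<rho>' s) (at s within {t..T})) \<and>
        (\<forall>s\<in>{t..T}. \<rho> s \<in> open_cube) \<and>
        (\<forall>s\<in>{t<..<T}. \<phi>' s = H (\<rho> s, lam *\<^sub>R ggrad w (\<phi> s)) - glap w (\<phi> s)) \<and>
        (\<forall>s\<in>{t<..<T}. \<rho>' s = gdiv w (B (\<rho> s, lam *\<^sub>R ggrad w (\<phi> s))) + glap w (\<rho> s)) \<and>
        \<phi> T = g (\<rho> T) \<and> \<rho> t = \<mu>)"

end

theory Submission
  imports Defs
begin

text \<open>
  At a maximal component the graph Laplacian of \<phi> is nonpositive, so there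
  \<phi>'_i = H_i - (\<Delta>\<phi>)_i \<ge> -C1: backwards from T the largest component grows at rate at most C1,
  which gives \<phi>_i(s) \<le> C1 (1 + T - s). Summing the equation for \<phi> the Laplacian drops out, so
  \<Sum>\<phi>_i decreases at rate at most n C1. In d/ds (\<phi> \<cdot> \<rho>) the Laplacian terms cancel by symmetry
  and summation by parts turns \<phi> \<cdot> div B into -(B, \<nabla>\<phi>), so the hypothesis on (B, p) bounds
  d/ds \<lambda>(\<phi> \<cdot> \<rho>) by 2 C1; with the terminal condition this bounds \<lambda>\<phi>(t) \<cdot> \<mu> from below.
  Finally the excesses \<lambda>\<phi>_i - \<lambda>C1 (1 + T - s) are nonpositive, so, as \<mu>_i > \<epsilon>, their
  \<mu>-weighted sum at time t is at most \<epsilon> times their plain sum; that plain sum is nondecreasing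
  in time and at most any single excess, which bounds \<epsilon>\<lambda>\<phi>_i(s) from below.
\<close>

lemma sum_sum_antisym_eq_0:
  fixes f :: "'a::finite \<Rightarrow> 'a \<Rightarrow> real"
  assumes "\<And>i j. f i j = - f j i"
  shows "(\<Sum>i\<in>UNIV. \<Sum>j\<in>UNIV. f i j) = 0"
proof -
  have "(\<Sum>i\<in>UNIV. \<Sum>j\<in>UNIV. f i j) = (\<Sum>j\<in>UNIV. \<Sum>i\<in>UNIV. f i j)"
    by (rule sum.swap)
  also have "\<dots> = (\<Sum>j\<in>UNIV. \<Sum>i\<in>UNIV. - f j i)"
    by (intro sum.cong refl assms)
  also have "\<dots> = - (\<Sum>j\<in>UNIV. \<Sum>i\<in>UNIV. f j i)"
    by (simp add: sum_negf)
  finally show ?thesis by simp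
qed

context
  fixes w :: "'n::finite \<Rightarrow> 'n \<Rightarrow> real"
  assumes G: "weighted_graph w"
begin

lemma weighted_graph_sym: "w i j = w j i"
  and weighted_graph_nonneg: "0 \<le> w i j"
  and weighted_graph_diag: "w i i = 0"
  using G by (simp_all add: weighted_graph_def)

lemma skew_scaleR_ggrad: "skew (c *\<^sub>R ggrad w u)"
  by (simp add: skew_def ggrad_def weighted_graph_sym algebra_simps)

lemma gdiv_eq_sum: "gdiv w M $ i = (\<Sum>j\<in>UNIV. sqrt (w i j) * M$j$i)"
  by (simp add: gdiv_def sum.remove[of UNIV i] weighted_graph_diag)

lemma sum_glap_eq_0: "(\<Sum>i\<in>UNIV. glap w u $ i) = 0"
  by (simp add: glap_def, rule sum_sum_antisym_eq_0) (simp add: weighted_graph_sym algebra_simps)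

lemma sum_gdiv_eq_0:
  assumes "skew M"
  shows "(\<Sum>i\<in>UNIV. gdiv w M $ i) = 0"
  unfolding gdiv_eq_sum
  by (rule sum_sum_antisym_eq_0) (metis assms skew_def weighted_graph_sym mult_minus_right)

lemma inner_glap_commute: "u \<bullet> glap w v = v \<bullet> glap w u"
proof -
  have "u \<bullet> glap w v - v \<bullet> glap w u
     = (\<Sum>i\<in>UNIV. \<Sum>j\<in>UNIV. w i j * (u$i * v$j - v$i * u$j))"
    by (simp add: inner_vec_def glap_def sum_distrib_left sum_subtractf[symmetric] algebra_simps)
  also have "\<dots> = 0"
    by (rule sum_sum_antisym_eq_0) (simp add: weighted_graph_sym algebra_simps)
  finally show ?thesis by simp
qed

lemma Sinner_scaleR_ggrad:
  assumes M: "skew M"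
  shows "Sinner w M (c *\<^sub>R ggrad w u) = - c * (u \<bullet> gdiv w M)"
proof -
  define a where "a i j = c * (M$i$j * sqrt (w i j))" for i j
  have on_edge: "0 < w i j" if "a i j \<noteq> 0" for i j
    using that weighted_graph_nonneg[of i j] by (auto simp: a_def less_le)
  have "2 * Sinner w M (c *\<^sub>R ggrad w u) = (\<Sum>(i, j)\<in>{(i, j). 0 < w i j}. a i j * (u$i - u$j))"
    by (simp add: Sinner_def ggrad_def a_def algebra_simps)
  also have "\<dots> = (\<Sum>(i, j)\<in>UNIV. a i j * (u$i - u$j))"
    by (rule sum.mono_neutral_left) (auto dest: on_edge)
  also have "\<dots> = (\<Sum>i\<in>UNIV. \<Sum>j\<in>UNIV. a i j * u$i) - (\<Sum>i\<in>UNIV. \<Sum>j\<in>UNIV. a i j * u$j)"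
    unfolding UNIV_Times_UNIV[symmetric] sum.cartesian_product[symmetric]
    by (simp add: sum_subtractf right_diff_distrib)
  also have "(\<Sum>i\<in>UNIV. \<Sum>j\<in>UNIV. a i j * u$j) = (\<Sum>j\<in>UNIV. \<Sum>i\<in>UNIV. a i j * u$j)"
    by (rule sum.swap)
  also have "(\<Sum>i\<in>UNIV. \<Sum>j\<in>UNIV. a i j * u$i) = - c * (u \<bullet> gdiv w M)"
  proof -
    have "a i j = - c * (sqrt (w i j) * M$j$i)" for i j
      using M[unfolded skew_def, rule_format, of i j] by (simp add: a_def)
    then show ?thesis
      by (simp add: inner_vec_def gdiv_eq_sum sum_distrib_left algebra_simps)
  qed
  also have "(\<Sum>j\<in>UNIV. \<Sum>i\<in>UNIV. a i j * u$j) = c * (u \<bullet> gdiv w M)"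
    by (simp add: a_def inner_vec_def gdiv_eq_sum sum_distrib_left weighted_graph_sym algebra_simps)
  finally show ?thesis by simp
qed

lemma glap_nonpos_at_max:
  assumes "\<And>j. u$j \<le> u$i"
  shows "glap w u $ i \<le> 0"
  unfolding glap_def using assms weighted_graph_nonneg
  by (simp add: sum_nonpos mult_nonneg_nonpos)

end

lemma has_real_derivative_vec_nth:
  fixes f :: "real \<Rightarrow> real^'n"
  assumes "(f has_vector_derivative f') F"
  shows "((\<lambda>x. f x $ i) has_real_derivative f' $ i) F"
  using bounded_linear.has_vector_derivative[OF bounded_linear_vec_nth assms]
  by (simp add: has_real_derivative_iff_has_vector_derivative)

lemma has_real_derivative_inner:
  fixes f g :: "real \<Rightarrow> 'a::real_inner"
  assumes "(f has_vector_derivative f') (at x)" and "(g has_vector_derivative g') (at x)"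
  shows "((\<lambda>x. f x \<bullet> g x) has_real_derivative f x \<bullet> g' + f' \<bullet> g x) (at x)"
  using bounded_bilinear.has_vector_derivative[OF bounded_bilinear_inner assms]
  by (simp add: has_real_derivative_iff_has_vector_derivative)

lemma ex_max_finite_UNIV:
  fixes f :: "'a::finite \<Rightarrow> 'b::linorder"
  shows "\<exists>i. \<forall>k. f k \<le> f i"
proof -
  have "Max (range f) \<in> range f"
    by (rule Max_in) auto
  then obtain i where "Max (range f) = f i"
    by (rule rangeE)
  then have "f k \<le> f i" for k
    using Max_ge[of "range f" "f k"] by simp
  then show ?thesis by blast
qed

text \<open>At the last time some component is nonnegative, a maximal component would still be
  increasing.\<close>
lemma backward_max_principle_strict:
  fixes v v' :: "real \<Rightarrow> real^'n"
  assumes cont: "continuous_on {a..b} v"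
    and deriv: "\<And>s. s \<in> {a<..<b} \<Longrightarrow> (v has_vector_derivative v' s) (at s)"
    and final: "\<And>k. v b $ k < 0"
    and at_max: "\<And>s i. s \<in> {a<..<b} \<Longrightarrow> 0 \<le> v s $ i \<Longrightarrow> (\<And>k. v s $ k \<le> v s $ i) \<Longrightarrow> 0 < v' s $ i"
    and x: "x \<in> {a<..b}"
  shows "v x $ j < 0"
proof (rule ccontr)
  assume "\<not> v x $ j < 0"
  define S where "S = (\<Union>k. {y \<in> {x..b}. 0 \<le> v y $ k})"
  define m where "m = Sup S"
  have "closed {y \<in> {x..b}. 0 \<le> v y $ k}" for k
    using x by (intro continuous_on_closed_Collect_le continuous_intros continuous_on_subset[OF cont]) auto
  then have "closed S" by (auto simp: S_def)
  moreover have "x \<in> S" "bdd_above S"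
    using \<open>\<not> v x $ j < 0\<close> x by (auto simp: S_def not_less intro: bdd_aboveI[of _ b])
  ultimately have "m \<in> S" and m_ge: "\<And>y. y \<in> S \<Longrightarrow> y \<le> m"
    unfolding m_def by (auto intro: closed_contains_Sup cSup_upper)
  then obtain k where m: "x \<le> m" "m \<le> b" "0 \<le> v m $ k"
    by (auto simp: S_def)
  with final[of k] have "m < b" by (cases "m = b") auto
  with m x have m_in: "m \<in> {a<..<b}" by auto
  obtain i where i_max: "\<And>k'. v m $ k' \<le> v m $ i"
    using ex_max_finite_UNIV[of "\<lambda>k. v m $ k"] by blast
  with m have "0 \<le> v m $ i" by (meson order_trans)
  with i_max at_max[OF m_in] have "0 < v' m $ i" by blast
  then obtain d where "0 < d" and inc: "\<And>h. 0 < h \<Longrightarrow> h < d \<Longrightarrow> v m $ i < v (m + h) $ i"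
    using DERIV_pos_inc_right[OF has_real_derivative_vec_nth[OF deriv[OF m_in]]] by blast
  obtain h where "0 < h" "h < d" "m + h \<le> b"
    using field_lbound_gt_zero[of d "b - m"] \<open>0 < d\<close> \<open>m < b\<close> by force
  have "0 \<le> v (m + h) $ i"
    using inc[OF \<open>0 < h\<close> \<open>h < d\<close>] \<open>0 \<le> v m $ i\<close> by linarith
  with m \<open>0 < h\<close> \<open>m + h \<le> b\<close> have "m + h \<in> S"
    by (auto simp: S_def)
  with m_ge \<open>0 < h\<close> show False by fastforce
qed

lemma backward_max_principle:
  fixes u u' :: "real \<Rightarrow> real^'n"
  assumes "a < b"
    and cont: "continuous_on {a..b} u"
    and deriv: "\<And>s. s \<in> {a<..<b} \<Longrightarrow> (u has_vector_derivative u' s) (at s)"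
    and final: "\<And>k. u b $ k \<le> M"
    and at_max: "\<And>s i. s \<in> {a<..<b} \<Longrightarrow> (\<And>k. u s $ k \<le> u s $ i) \<Longrightarrow> - c \<le> u' s $ i"
    and s: "s \<in> {a..b}"
  shows "u s $ j \<le> M + c * (b - s)"
proof (rule field_le_epsilon)
  fix e :: real
  assume "0 < e"
  define \<delta> where "\<delta> = e / (1 + b - s)"
  have "0 < \<delta>" and e_eq: "e = \<delta> * (1 + b - s)"
    using \<open>0 < e\<close> s by (auto simp: \<delta>_def)
  define v where "v y = u y - (M + c * (b - y) + \<delta> * (1 + b - y)) *\<^sub>R 1" for y
  have v_nth: "v y $ k = u y $ k - (M + c * (b - y) + \<delta> * (1 + b - y))" for y k
    by (simp add: v_def)
  have "v y $ j < 0" if "y \<in> {a<..b}" for y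
  proof (rule backward_max_principle_strict[OF _ _ _ _ that])
    show "continuous_on {a..b} v"
      unfolding v_def by (intro continuous_intros cont)
    show "(v has_vector_derivative u' s + (c + \<delta>) *\<^sub>R 1) (at s)" if "s \<in> {a<..<b}" for s
      unfolding v_def using deriv[OF that]
      by (auto intro!: derivative_eq_intros simp: algebra_simps)
    show "v b $ k < 0" for k
      using final[of k] \<open>0 < \<delta>\<close> by (simp add: v_nth)
    show "0 < (u' s + (c + \<delta>) *\<^sub>R 1) $ i"
      if "s \<in> {a<..<b}" "\<And>k. v s $ k \<le> v s $ i" for s i
    proof -
      have "u s $ k \<le> u s $ i" for k
        using that(2)[of k] by (simp add: v_nth)
      with at_max[OF that(1)] \<open>0 < \<delta>\<close> show ?thesis by force
    qed
  qed
  then have "{a<..b} \<subseteq> {y \<in> {a..b}. v y $ j \<le> 0}"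
    by (auto simp: less_imp_le)
  moreover have "closed {y \<in> {a..b}. v y $ j \<le> 0}"
    unfolding v_def by (intro continuous_on_closed_Collect_le continuous_intros cont)
  ultimately have "{a..b} \<subseteq> {y \<in> {a..b}. v y $ j \<le> 0}"
    using closure_minimal closure_greaterThanAtMost[OF \<open>a < b\<close>] by metis
  with s show "u s $ j \<le> M + c * (b - s) + e"
    by (auto simp: v_nth e_eq algebra_simps)
qed

lemma const_mult_sum_le_inner:
  fixes h r :: "real^'n"
  assumes "\<And>j. c \<le> h $ j" and "\<And>j. 0 \<le> r $ j"
  shows "c * (\<Sum>j\<in>UNIV. r $ j) \<le> h \<bullet> r"
  unfolding inner_vec_def sum_distrib_left
  by (rule sum_mono) (simp add: assms mult_right_mono)

lemma Peps_less_one: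
  fixes \<mu> :: "real^'n"
  assumes "\<mu> \<in> Peps \<epsilon>"
  shows "\<epsilon> < 1"
proof (cases "\<epsilon> < 0")
  case False
  then have "0 < \<mu> $ k" for k
    using assms by (auto simp: Peps_def intro: le_less_trans[of 0 \<epsilon>])
  then have "\<mu> $ j \<le> (\<Sum>k\<in>UNIV. \<mu> $ k)" for j
    by (intro member_le_sum) (auto simp: less_imp_le)
  with assms show ?thesis by (auto simp: Peps_def intro: less_le_trans)
qed simp

lemma Peps_inner_le:
  fixes z \<mu> :: "real^'n"
  assumes "\<mu> \<in> Peps \<epsilon>" and "\<And>j. z $ j \<le> 0"
  shows "z \<bullet> \<mu> \<le> \<epsilon> * (\<Sum>j\<in>UNIV. z $ j)"
  unfolding inner_vec_def inner_real_def sum_distrib_left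
proof (rule sum_mono)
  fix j
  have "0 \<le> \<mu> $ j - \<epsilon>"
    using assms(1) by (simp add: Peps_def less_imp_le)
  then have "(\<mu> $ j - \<epsilon>) * z $ j \<le> 0"
    using assms(2) by (rule mult_nonneg_nonpos)
  then show "z $ j * \<mu> $ j \<le> \<epsilon> * z $ j"
    by (simp add: algebra_simps)
qed

lemma eps_abs_le_max:
  fixes x y \<mu> :: "real^'n"
  assumes \<mu>: "\<mu> \<in> Peps \<epsilon>" and "0 < \<epsilon>" and "0 \<le> U"
    and x_le: "\<And>j. x $ j \<le> U" and y_le: "\<And>j. y $ j \<le> V"
    and excess: "(\<Sum>j\<in>UNIV. y $ j - V) \<le> (\<Sum>j\<in>UNIV. x $ j - U)"
  shows "\<epsilon> * \<bar>x $ i\<bar> \<le> max U (V - y \<bullet> \<mu>)"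
proof -
  have "\<epsilon> * x $ i \<le> \<epsilon> * U"
    using x_le \<open>0 < \<epsilon>\<close> by simp
  also have "\<dots> \<le> U"
    using Peps_less_one[OF \<mu>] \<open>0 < \<epsilon>\<close> \<open>0 \<le> U\<close> by (intro mult_left_le_one_le) auto
  finally have upper: "\<epsilon> * x $ i \<le> U" .
  have "y \<bullet> \<mu> - V = (y - V *\<^sub>R 1) \<bullet> \<mu>"
    using \<mu> by (simp add: Peps_def inner_vec_def left_diff_distrib sum_subtractf flip: sum_distrib_left)
  also have "\<dots> \<le> \<epsilon> * (\<Sum>j\<in>UNIV. y $ j - V)"
    using Peps_inner_le[OF \<mu>, of "y - V *\<^sub>R 1"] y_le by simp
  also have "\<dots> \<le> \<epsilon> * (\<Sum>j\<in>UNIV. x $ j - U)"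
    using excess \<open>0 < \<epsilon>\<close> by simp
  also have "\<dots> \<le> \<epsilon> * (x $ i - U)"
  proof -
    have "U - x $ i \<le> (\<Sum>j\<in>UNIV. U - x $ j)"
      using x_le by (intro member_le_sum) auto
    then show ?thesis
      using \<open>0 < \<epsilon>\<close> by (simp add: sum_subtractf)
  qed
  also have "\<dots> \<le> \<epsilon> * x $ i"
    using \<open>0 < \<epsilon>\<close> \<open>0 \<le> U\<close> by (simp add: algebra_simps)
  finally have "- (\<epsilon> * x $ i) \<le> V - y \<bullet> \<mu>"
    by simp
  with upper \<open>0 < \<epsilon>\<close> show ?thesis
    by (auto simp: abs_mult abs_if)
qed

locale graph_mfg_solution =
  fixes w :: "'n::finite \<Rightarrow> 'n \<Rightarrow> real"
    and H :: "(real^'n) \<times> (real^'n^'n) \<Rightarrow> real^'n"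
    and B :: "(real^'n) \<times> (real^'n^'n) \<Rightarrow> real^'n^'n"
    and lam t T :: real
    and \<phi> \<rho> \<phi>' \<rho>' :: "real \<Rightarrow> real^'n"
  assumes graph: "weighted_graph w"
    and t_less_T: "t < T"
    and B_skew: "\<And>x. x \<in> SDom \<Longrightarrow> skew (B x)"
    and phi_cont: "continuous_on {t..T} \<phi>"
    and rho_cont: "continuous_on {t..T} \<rho>"
    and phi_deriv: "\<And>s. s \<in> {t<..<T} \<Longrightarrow> (\<phi> has_vector_derivative \<phi>' s) (at s)"
    and rho_deriv: "\<And>s. s \<in> {t<..<T} \<Longrightarrow> (\<rho> has_vector_derivative \<rho>' s) (at s)"
    and rho_cube: "\<And>s. s \<in> {t..T} \<Longrightarrow> \<rho> s \<in> open_cube"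
    and phi_eq: "\<And>s. s \<in> {t<..<T} \<Longrightarrow> \<phi>' s = H (\<rho> s, lam *\<^sub>R ggrad w (\<phi> s)) - glap w (\<phi> s)"
    and rho_eq: "\<And>s. s \<in> {t<..<T} \<Longrightarrow>
      \<rho>' s = gdiv w (B (\<rho> s, lam *\<^sub>R ggrad w (\<phi> s))) + glap w (\<rho> s)"
begin

lemma in_SDom: "s \<in> {t..T} \<Longrightarrow> (\<rho> s, lam *\<^sub>R ggrad w (\<phi> s)) \<in> SDom"
  using rho_cube skew_scaleR_ggrad[OF graph] by (simp add: SDom_def)

lemma rho_nonneg: "s \<in> {t..T} \<Longrightarrow> 0 \<le> \<rho> s $ j"
  using rho_cube by (auto simp: open_cube_def less_imp_le)

lemma mass_conservation:
  assumes s: "s \<in> {t..T}"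
  shows "(\<Sum>j\<in>UNIV. \<rho> s $ j) = (\<Sum>j\<in>UNIV. \<rho> t $ j)"
proof (cases "s = t")
  case False
  with s have "t < s" by auto
  show ?thesis
  proof (rule DERIV_isconst_end[of t s "\<lambda>x. \<Sum>j\<in>UNIV. \<rho> x $ j", OF \<open>t < s\<close>])
    show "continuous_on {t..s} (\<lambda>x. \<Sum>j\<in>UNIV. \<rho> x $ j)"
      using s by (intro continuous_intros continuous_on_subset[OF rho_cont]) auto
    fix x assume "t < x" "x < s"
    with s have x: "x \<in> {t<..<T}" by auto
    have "(\<Sum>j\<in>UNIV. \<rho>' x $ j) = 0"
      using rho_eq[OF x] sum_gdiv_eq_0[OF graph B_skew[OF in_SDom]] sum_glap_eq_0[OF graph] x
      by (simp add: sum.distrib)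
    with has_real_derivative_vec_nth[OF rho_deriv[OF x]]
    show "((\<lambda>x. \<Sum>j\<in>UNIV. \<rho> x $ j) has_real_derivative 0) (at x)"
      by (metis DERIV_sum)
  qed
qed simp

lemma phi_le:
  assumes H_ge: "\<And>x i. x \<in> SDom \<Longrightarrow> - C \<le> H x $ i"
    and final: "\<And>j. \<phi> T $ j \<le> M"
    and s: "s \<in> {t..T}"
  shows "\<phi> s $ j \<le> M + C * (T - s)"
proof (rule backward_max_principle[OF t_less_T phi_cont phi_deriv final _ s])
  fix s i assume s: "s \<in> {t<..<T}" and "\<And>k. \<phi> s $ k \<le> \<phi> s $ i"
  then have "glap w (\<phi> s) $ i \<le> 0"
    using glap_nonpos_at_max[OF graph] by blast
  with H_ge[OF in_SDom, of s i] s show "- C \<le> \<phi>' s $ i"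
    by (simp add: phi_eq)
qed

lemma phi_sum_ge:
  assumes H_ge: "\<And>x i. x \<in> SDom \<Longrightarrow> - C \<le> H x $ i"
    and s: "s \<in> {t..T}"
  shows "(\<Sum>j\<in>UNIV. \<phi> t $ j) - real CARD('n) * C * (s - t) \<le> (\<Sum>j\<in>UNIV. \<phi> s $ j)"
proof -
  define f where "f x = (\<Sum>j\<in>UNIV. \<phi> x $ j) + real CARD('n) * C * x" for x
  have "f t \<le> f s"
  proof (rule DERIV_nonneg_imp_increasing_open[of t s f])
    show "continuous_on {t..s} f"
      unfolding f_def using s by (intro continuous_intros continuous_on_subset[OF phi_cont]) auto
    fix x assume "t < x" "x < s"
    with s have x: "x \<in> {t<..<T}" by auto
    have "(f has_real_derivative (\<Sum>j\<in>UNIV. \<phi>' x $ j) + real CARD('n) * C) (at x)"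
      unfolding f_def using has_real_derivative_vec_nth[OF phi_deriv[OF x]]
      by (auto intro!: derivative_eq_intros)
    moreover have "(\<Sum>j\<in>UNIV. \<phi>' x $ j) = (\<Sum>j\<in>UNIV. H (\<rho> x, lam *\<^sub>R ggrad w (\<phi> x)) $ j)"
      using sum_glap_eq_0[OF graph] by (simp add: phi_eq[OF x] sum_subtractf)
    moreover have "(\<Sum>j\<in>(UNIV :: 'n set). - C) \<le> (\<Sum>j\<in>UNIV. H (\<rho> x, lam *\<^sub>R ggrad w (\<phi> x)) $ j)"
      by (intro sum_mono H_ge in_SDom) (use x in auto)
    ultimately show "\<exists>y. (f has_real_derivative y) (at x) \<and> 0 \<le> y"
      by auto
  qed (use s in auto)
  then show ?thesis by (simp add: f_def algebra_simps)
qed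

lemma duality_estimate:
  assumes HB: "\<And>m p. (m, p) \<in> SDom \<Longrightarrow> H (m, p) \<bullet> m - C \<le> Sinner w (B (m, p)) p"
    and H_ge: "\<And>x i. x \<in> SDom \<Longrightarrow> - C \<le> H x $ i"
    and "0 \<le> C" and lam: "0 \<le> lam" "lam \<le> 1"
    and mass: "(\<Sum>j\<in>UNIV. \<rho> t $ j) = 1"
  shows "lam * (\<phi> T \<bullet> \<rho> T) - lam * (\<phi> t \<bullet> \<rho> t) \<le> 2 * C * (T - t)"
proof -
  define f where "f x = 2 * C * x - lam * (\<phi> x \<bullet> \<rho> x)" for x
  have "f t \<le> f T"
  proof (rule DERIV_nonneg_imp_increasing_open[of t T f])
    show "continuous_on {t..T} f"
      unfolding f_def by (intro continuous_intros phi_cont rho_cont)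
    fix x assume "t < x" "x < T"
    then have x: "x \<in> {t<..<T}" and x': "x \<in> {t..T}" by auto
    define p where "p = lam *\<^sub>R ggrad w (\<phi> x)"
    define h where "h = H (\<rho> x, p)"
    define S where "S = Sinner w (B (\<rho> x, p)) p"
    have "(f has_real_derivative 2 * C - lam * (\<phi> x \<bullet> \<rho>' x + \<phi>' x \<bullet> \<rho> x)) (at x)"
      using has_real_derivative_inner[OF phi_deriv[OF x] rho_deriv[OF x]] unfolding f_def
      by (intro DERIV_diff DERIV_cmult) (auto intro!: derivative_eq_intros)
    moreover have "lam * (\<phi> x \<bullet> \<rho>' x + \<phi>' x \<bullet> \<rho> x) = lam * (h \<bullet> \<rho> x) - S"
    proof -
      have "glap w (\<phi> x) \<bullet> \<rho> x = \<phi> x \<bullet> glap w (\<rho> x)"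
        using inner_glap_commute[OF graph, of "\<rho> x" "\<phi> x"] by (simp add: inner_commute)
      moreover have "S = - lam * (\<phi> x \<bullet> gdiv w (B (\<rho> x, p)))"
        unfolding S_def p_def by (rule Sinner_scaleR_ggrad[OF graph B_skew[OF in_SDom[OF x']]])
      ultimately show ?thesis
        by (simp add: phi_eq[OF x] rho_eq[OF x] h_def p_def inner_add_right inner_diff_left
            algebra_simps)
    qed
    ultimately have deriv: "(f has_real_derivative 2 * C - (lam * (h \<bullet> \<rho> x) - S)) (at x)"
      by simp
    have "h \<bullet> \<rho> x - C \<le> S"
      using HB in_SDom[OF x'] by (simp add: h_def S_def p_def)
    moreover have "(1 - lam) * - C \<le> (1 - lam) * (h \<bullet> \<rho> x)"
    proof (rule mult_left_mono)
      show "- C \<le> h \<bullet> \<rho> x"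
        using const_mult_sum_le_inner[of "- C" h "\<rho> x"] H_ge in_SDom[OF x'] rho_nonneg[OF x']
          mass_conservation[OF x'] mass
        by (simp add: h_def p_def)
    qed (use lam in simp)
    moreover have "0 \<le> lam * C"
      using lam \<open>0 \<le> C\<close> by simp
    ultimately have "0 \<le> 2 * C - (lam * (h \<bullet> \<rho> x) - S)"
      by (simp add: algebra_simps)
    with deriv show "\<exists>y. (f has_real_derivative y) (at x) \<and> 0 \<le> y"
      by blast
  qed (use t_less_T in auto)
  then show ?thesis by (simp add: f_def algebra_simps)
qed

lemma eps_lam_phi_bound:
  assumes HB: "\<And>m p. (m, p) \<in> SDom \<Longrightarrow> H (m, p) \<bullet> m - C \<le> Sinner w (B (m, p)) p"
    and H_ge: "\<And>x i. x \<in> SDom \<Longrightarrow> - C \<le> H x $ i"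
    and "0 \<le> C" and lam: "0 \<le> lam" "lam \<le> 1"
    and terminal: "\<And>j. \<bar>\<phi> T $ j\<bar> \<le> C"
    and \<mu>: "\<rho> t \<in> Peps \<epsilon>" and "0 < \<epsilon>"
    and s: "s \<in> {t..T}"
  shows "\<epsilon> * \<bar>lam * \<phi> s $ i\<bar> \<le> (5 * (T - t) + 4) * C"
proof -
  have mass: "(\<Sum>j\<in>UNIV. \<rho> t $ j) = 1"
    using \<mu> by (simp add: Peps_def)
  have lam_C: "lam * C \<le> C"
    using mult_left_le_one_le[OF \<open>0 \<le> C\<close> lam] .
  have "\<phi> T $ j \<le> C" for j
    using terminal abs_le_D1 by blast
  then have "\<phi> r $ j \<le> C * (1 + T - r)" if "r \<in> {t..T}" for r j
    using phi_le[OF H_ge _ that, of C j] by (simp add: algebra_simps)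
  then have upper: "lam * \<phi> r $ j \<le> lam * C * (1 + T - r)" if "r \<in> {t..T}" for r j
    using mult_left_mono[OF _ lam(1)] that by (simp add: mult.assoc)
  define U V where "U = lam * C * (1 + T - s)" and "V = lam * C * (1 + T - t)"
  have "\<epsilon> * \<bar>(lam *\<^sub>R \<phi> s) $ i\<bar> \<le> max U (V - lam *\<^sub>R \<phi> t \<bullet> \<rho> t)"
  proof (rule eps_abs_le_max[OF \<mu> \<open>0 < \<epsilon>\<close>])
    show "0 \<le> U"
      using s lam \<open>0 \<le> C\<close> by (simp add: U_def)
    show "(lam *\<^sub>R \<phi> s) $ j \<le> U" for j
      using upper[OF s] by (simp add: U_def)
    show "(lam *\<^sub>R \<phi> t) $ j \<le> V" for j
      using upper[of t] t_less_T by (simp add: V_def)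
    have "lam * ((\<Sum>j\<in>UNIV. \<phi> t $ j) - real CARD('n) * C * (s - t)) \<le> lam * (\<Sum>j\<in>UNIV. \<phi> s $ j)"
      using phi_sum_ge[OF H_ge s] lam(1) by (rule mult_left_mono)
    then show "(\<Sum>j\<in>UNIV. (lam *\<^sub>R \<phi> t) $ j - V) \<le> (\<Sum>j\<in>UNIV. (lam *\<^sub>R \<phi> s) $ j - U)"
      by (simp add: U_def V_def sum_subtractf sum.distrib sum_distrib_left algebra_simps)
  qed
  moreover have "V \<le> C * (1 + T - t)"
    unfolding V_def using lam_C t_less_T by (intro mult_right_mono) auto
  moreover have "U \<le> V"
    unfolding U_def V_def using lam \<open>0 \<le> C\<close> s by (intro mult_left_mono) auto
  moreover have "- C \<le> lam *\<^sub>R \<phi> t \<bullet> \<rho> t + 2 * C * (T - t)"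
  proof -
    have T: "T \<in> {t..T}"
      using t_less_T by simp
    have "- C \<le> \<phi> T $ j" for j
      using terminal[of j] by linarith
    then have "- C \<le> \<phi> T \<bullet> \<rho> T"
      using const_mult_sum_le_inner[of "- C" "\<phi> T" "\<rho> T"] rho_nonneg[OF T]
        mass_conservation[OF T] mass by simp
    then have "lam * - C \<le> lam * (\<phi> T \<bullet> \<rho> T)"
      using lam(1) by (rule mult_left_mono)
    with lam_C duality_estimate[OF HB H_ge \<open>0 \<le> C\<close> lam mass] show ?thesis
      by simp
  qed
  moreover have "0 \<le> C * (T - t)"
    using \<open>0 \<le> C\<close> t_less_T by simp
  ultimately have "\<epsilon> * \<bar>lam * \<phi> s $ i\<bar> \<le> C * (1 + T - t) + C + 2 * C * (T - t)"
    using \<open>0 \<le> C\<close> by (auto simp: max_def split: if_split_asm)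
  also have "\<dots> \<le> (5 * (T - t) + 4) * C"
    using \<open>0 \<le> C\<close> \<open>0 \<le> C * (T - t)\<close> by (simp add: algebra_simps)
  finally show ?thesis .
qed

end

lemma classical_solution_graph_mfg_solution:
  assumes "weighted_graph w" and "t < T" and "\<And>x. x \<in> SDom \<Longrightarrow> skew (B x)"
    and "classical_solution w H B g lam \<mu> t T \<phi> \<rho>"
  obtains \<phi>' \<rho>' where "graph_mfg_solution w H B lam t T \<phi> \<rho> \<phi>' \<rho>'"
    and "\<phi> T = g (\<rho> T)" and "\<rho> t = \<mu>"
proof -
  obtain \<phi>' \<rho>' where
      dphi: "\<And>s. s \<in> {t..T} \<Longrightarrow> (\<phi> has_vector_derivative \<phi>' s) (at s within {t..T})"
    and drho: "\<And>s. s \<in> {t..T} \<Longrightarrow> (\<rho> has_vector_derivative \<rho>' s) (at s within {t..T})"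
    and rest: "\<forall>s\<in>{t..T}. \<rho> s \<in> open_cube"
      "\<forall>s\<in>{t<..<T}. \<phi>' s = H (\<rho> s, lam *\<^sub>R ggrad w (\<phi> s)) - glap w (\<phi> s)"
      "\<forall>s\<in>{t<..<T}. \<rho>' s = gdiv w (B (\<rho> s, lam *\<^sub>R ggrad w (\<phi> s))) + glap w (\<rho> s)"
      "\<phi> T = g (\<rho> T)" "\<rho> t = \<mu>"
    using assms(4) unfolding classical_solution_def by blast
  have "graph_mfg_solution w H B lam t T \<phi> \<rho> \<phi>' \<rho>'"
  proof
    show "continuous_on {t..T} \<phi>" "continuous_on {t..T} \<rho>"
      unfolding continuous_on_eq_continuous_within
      using dphi drho has_vector_derivative_continuous by blast+
    show "(\<phi> has_vector_derivative \<phi>' s) (at s)" "(\<rho> has_vector_derivative \<rho>' s) (at s)"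
      if "s \<in> {t<..<T}" for s
      using dphi[of s] drho[of s] that at_within_Icc_at[of t s T] by auto
  qed (use assms rest in auto)
  with rest show ?thesis using that by blast
qed

theorem proposition3p3:
  fixes w :: "'n::finite \<Rightarrow> 'n \<Rightarrow> real"
    and H :: "(real^'n) \<times> (real^'n^'n) \<Rightarrow> real^'n"
    and B :: "(real^'n) \<times> (real^'n^'n) \<Rightarrow> real^'n^'n"
    and g :: "real^'n \<Rightarrow> real^'n"
    and T C1 \<epsilon> t lam :: real and \<mu> :: "real^'n"
    and \<phi> \<rho> :: "real \<Rightarrow> real^'n"
  assumes G: "weighted_graph w"
    and T: "T > 0" and C1: "C1 > 0"
    and H_C1: "C1_on SDom H" and B_C1: "C1_on SDom B"
    and B_skew: "\<forall>x\<in>SDom. skew (B x)"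
    and HB: "\<forall>m p. (m, p) \<in> SDom \<longrightarrow> Sinner w (B (m, p)) p \<ge> H (m, p) \<bullet> m - C1"
    and Hlow: "\<forall>m p i. (m, p) \<in> SDom \<longrightarrow> H (m, p) $ i \<ge> - C1"
    and gb: "\<forall>x\<in>closed_cube. \<forall>i. \<bar>g x $ i\<bar> \<le> C1"
    and eps: "\<epsilon> > 0" and mu: "\<mu> \<in> Peps \<epsilon>"
    and t: "0 \<le> t" "t < T" and lam: "0 \<le> lam" "lam \<le> 1"
    and sol: "classical_solution w H B g lam \<mu> t T \<phi> \<rho>"
  shows "\<forall>s\<in>{t<..<T}. \<epsilon> * (MAX i\<in>UNIV. \<bar>lam * \<phi> s $ i\<bar>) \<le> (5 * (T - t) + 4) * C1"
proof
  fix s assume s: "s \<in> {t<..<T}"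
  obtain \<phi>' \<rho>' where solution: "graph_mfg_solution w H B lam t T \<phi> \<rho> \<phi>' \<rho>'"
    and terminal: "\<phi> T = g (\<rho> T)" and initial: "\<rho> t = \<mu>"
    using classical_solution_graph_mfg_solution[OF G t(2) _ sol] B_skew by blast
  interpret graph_mfg_solution w H B lam t T \<phi> \<rho> \<phi>' \<rho>'
    by (fact solution)
  have "\<rho> T \<in> closed_cube"
    using rho_cube[of T] t by (auto simp: open_cube_def closed_cube_def less_imp_le)
  then have "\<bar>\<phi> T $ j\<bar> \<le> C1" for j
    using gb terminal by simp
  then have bound: "\<epsilon> * \<bar>lam * \<phi> s $ i\<bar> \<le> (5 * (T - t) + 4) * C1" for i
    using eps_lam_phi_bound[of C1] HB Hlow C1 lam mu initial eps s by (auto simp: less_imp_le)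
  obtain i where "\<And>k. \<bar>lam * \<phi> s $ k\<bar> \<le> \<bar>lam * \<phi> s $ i\<bar>"
    using ex_max_finite_UNIV[of "\<lambda>k. \<bar>lam * \<phi> s $ k\<bar>"] by blast
  then have "(MAX k\<in>UNIV. \<bar>lam * \<phi> s $ k\<bar>) = \<bar>lam * \<phi> s $ i\<bar>"
    by (intro Max_eqI) auto
  with bound show "\<epsilon> * (MAX i\<in>UNIV. \<bar>lam * \<phi> s $ i\<bar>) \<le> (5 * (T - t) + 4) * C1"
    by simp
qed

end
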